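(* Let $t\in(-1,1)$ and $m,n$ integers. (i) If $t\neq0$ and $n-2\ge m\ge0$, then $\det\begin{pmatrix}P_n^m(t)&P_{n-2}^m(t)\\(P_n^m)'(t)&(P_{n-2}^m)'(t)\end{pmatrix}\neq0$. (ii) For $0\le m\le n$, $P_n^m(t)$ and $(P_n^m)'(t)$ do not vanish simultaneously.
   Context: $P_n$ is the Legendre polynomial of degree $n\in\mathbb{N}_0$ and $P_n^m(t)=(1-t^2)^{m/2}\frac{d^m}{dt^m}P_n(t)$, $0\le m\le n$, are the associated Legendre functions of the first kind. *)

theory Defs
  imports "HOL-Analysis.Analysis" "HOL-Computational_Algebra.Polynomial"
begin

definition legendre_poly :: "nat \<Rightarrow> real poly" where
  "legendre_poly n = smult (1 / (2 ^ n * fact n)) ((pderiv ^^ n) ([:-1, 0, 1:] ^ n))"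

definition assoc_legendre :: "nat \<Rightarrow> nat \<Rightarrow> real \<Rightarrow> real" where
  "assoc_legendre n m t = sqrt (1 - t\<^sup>2) ^ m * poly ((pderiv ^^ m) (legendre_poly n)) t"

end

theory Submission
  imports Defs
begin

text \<open>Write p_n for the m-th derivative of P_n, so that P_n^m = (1 - t^2)^(m/2) p_n with a weight
  that is positive on (-1, 1). The derivative of the weight cancels in the determinant of (i),
  which therefore equals (1 - t^2)^m W_n for the Wronskian W_n = p_n p_(n-2)' - p_(n-2) p_n'.

  (ii) p_n solves (t^2 - 1) y'' + (2m + 2) t y' + (m(m + 1) - n(n + 1)) y = 0, and the derivative
  of a solution of such an equation solves one of the same shape. So a double zero at a point
  with t^2 \<noteq> 1 is a zero of every derivative, which is impossible for the nonzero polynomial p_n.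

  (i) Applying the recurrence (n + 2 - m) p_(n+2) = (2n + 3) t p_(n+1) - (n + m + 1) p_n three
  times expresses W_(n+4) as a positive multiple of W_(n+2) minus a positive multiple of
  t p_(n+2)^2. As t W_(m+2) and t W_(m+3) are explicitly negative for t \<noteq> 0, induction gives
  t W_n < 0 for all n \<ge> m + 2.\<close>

section \<open>Iterated derivatives of polynomials\<close>

abbreviation X :: "real poly" where "X \<equiv> [:0, 1:]"
abbreviation L :: "real poly" where "L \<equiv> [:-1, 0, 1:]"

lemma poly_eqI_eval:
  fixes p q :: "'a::{idom,ring_char_0} poly"
  assumes "\<And>x. poly p x = poly q x"
  shows "p = q"
  using assms by (simp add: poly_eq_poly_eq_iff[symmetric] fun_eq_iff)

lemma pderiv_X: "pderiv X = 1"
  by (simp add: pderiv_pCons)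

lemma pderiv_L: "pderiv L = smult 2 X"
  by (simp add: pderiv_pCons)

lemma pderiv_L_power: "pderiv (L ^ Suc n) = smult (2 * real (Suc n)) (X * L ^ n)"
  by (simp only: pderiv_power_Suc pderiv_L) (simp add: algebra_simps)

lemma higher_pderiv_nonzero:
  fixes p :: "'a::{comm_semiring_1,semiring_no_zero_divisors,semiring_char_0} poly"
  assumes "p \<noteq> 0" and "k \<le> degree p"
  shows "(pderiv ^^ k) p \<noteq> 0"
  using assms
proof (induction k)
  case (Suc k)
  then have "degree ((pderiv ^^ k) p) \<noteq> 0"
    by (simp add: degree_higher_pderiv)
  then show ?case
    by (simp add: pderiv_eq_0_iff)
qed simp

lemma higher_pderiv_eq_0:
  fixes p :: "'a::{comm_semiring_1,semiring_no_zero_divisors,semiring_char_0} poly"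
  assumes "degree p < k"
  shows "(pderiv ^^ k) p = 0"
proof -
  obtain j where k: "k = Suc j" and "degree p \<le> j"
    using assms by (cases k) auto
  then have "degree ((pderiv ^^ j) p) = 0"
    by (simp add: degree_higher_pderiv)
  then show ?thesis
    using k by (simp add: pderiv_eq_0_iff)
qed

lemma higher_pderiv_X_mult:
  "(pderiv ^^ Suc k) (X * p) = X * (pderiv ^^ Suc k) p + smult (real (Suc k)) ((pderiv ^^ k) p)"
proof (induction k)
  case 0
  then show ?case by (simp add: pderiv_pCons)
next
  case (Suc k)
  have "(pderiv ^^ Suc (Suc k)) (X * p) = pderiv ((pderiv ^^ Suc k) (X * p))"
    by simp
  also have "\<dots> = pderiv (X * (pderiv ^^ Suc k) p + smult (real (Suc k)) ((pderiv ^^ k) p))"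
    by (simp only: Suc.IH)
  also have "\<dots> = X * (pderiv ^^ Suc (Suc k)) p + smult (real (Suc (Suc k))) ((pderiv ^^ Suc k) p)"
    by (rule poly_eqI_eval) (simp add: pderiv_add pderiv_mult pderiv_smult pderiv_pCons algebra_simps)
  finally show ?case .
qed

lemma pderiv_L_power_2:
  "pderiv (pderiv (L ^ (n + 2))) =
     smult (2 * real (n + 2) * (2 * real n + 3)) (L ^ (n + 1)) + smult (4 * real (n + 2) * real (n + 1)) (L ^ n)"
  by (simp only: add_2_eq_Suc' pderiv_L_power pderiv_smult pderiv_mult pderiv_X)
     (rule poly_eqI_eval, simp add: algebra_simps power2_eq_square)

section \<open>Derivatives of Legendre polynomials\<close>

lemma degree_legendre_poly: "degree (legendre_poly n) = n"
  by (simp add: legendre_poly_def degree_higher_pderiv degree_power_eq)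

lemma legendre_poly_nonzero: "legendre_poly n \<noteq> 0"
  unfolding legendre_poly_def
  by (simp add: higher_pderiv_nonzero degree_power_eq)

definition legendre_deriv :: "nat \<Rightarrow> nat \<Rightarrow> real poly" where
  "legendre_deriv n m = (pderiv ^^ m) (legendre_poly n)"

lemma legendre_deriv_rodrigues:
  "smult (2 ^ n * fact n) (legendre_deriv n m) = (pderiv ^^ (m + n)) (L ^ n)"
  by (simp add: legendre_deriv_def legendre_poly_def higher_pderiv_smult funpow_add)

lemma legendre_deriv_nonzero: "m \<le> n \<Longrightarrow> legendre_deriv n m \<noteq> 0"
  unfolding legendre_deriv_def
  by (simp add: higher_pderiv_nonzero legendre_poly_nonzero degree_legendre_poly)

lemma legendre_deriv_eq_0: "n < m \<Longrightarrow> legendre_deriv n m = 0"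
  unfolding legendre_deriv_def
  by (simp add: higher_pderiv_eq_0 degree_legendre_poly)

lemma legendre_deriv_diag:
  obtains c where "c \<noteq> 0" and "legendre_deriv m m = [:c:]"
proof -
  have "degree (legendre_deriv m m) = 0"
    by (simp add: legendre_deriv_def degree_higher_pderiv degree_legendre_poly)
  then obtain c where c: "legendre_deriv m m = [:c:]"
    by (meson degree0_coeffs)
  moreover have "c \<noteq> 0"
    using c legendre_deriv_nonzero[of m m] by auto
  ultimately show ?thesis
    using that by blast
qed

lemma rodrigues_recurrence:
  "smult (2 * real n + 2 - real k) ((pderiv ^^ (k + 2)) (L ^ (n + 2))) =
     smult (2 * real (n + 2) * (2 * real n + 3)) (X * (pderiv ^^ (k + 1)) (L ^ (n + 1)))
     - smult (4 * real (k + 1) * real (n + 2) * real (n + 1)) ((pderiv ^^ k) (L ^ n))"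
proof -
  have second: "(pderiv ^^ (k + 2)) (L ^ (n + 2)) =
      smult (2 * real (n + 2) * (2 * real n + 3)) ((pderiv ^^ k) (L ^ (n + 1)))
      + smult (4 * real (n + 2) * real (n + 1)) ((pderiv ^^ k) (L ^ n))"
  proof -
    have "(pderiv ^^ (k + 2)) q = (pderiv ^^ k) (pderiv (pderiv q))" for q :: "real poly"
      by (simp only: funpow_add o_apply) (simp add: numeral_2_eq_2)
    then show ?thesis
      by (simp only: pderiv_L_power_2 higher_pderiv_add higher_pderiv_smult)
  qed
  have first: "(pderiv ^^ (k + 2)) (L ^ (n + 2)) =
      smult (2 * real (n + 2)) (X * (pderiv ^^ (k + 1)) (L ^ (n + 1))
        + smult (real (k + 1)) ((pderiv ^^ k) (L ^ (n + 1))))"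
  proof -
    have "(pderiv ^^ (k + 2)) (L ^ (n + 2)) = (pderiv ^^ Suc k) (pderiv (L ^ Suc (n + 1)))"
      by (simp add: funpow_Suc_right numeral_2_eq_2 del: funpow.simps)
    then show ?thesis
      by (simp only: pderiv_L_power higher_pderiv_smult higher_pderiv_X_mult) (simp add: algebra_simps)
  qed
  show ?thesis
  proof (rule poly_eqI_eval, goal_cases)
    case (1 x)
    from arg_cong[OF first, of "\<lambda>p. poly p x"] arg_cong[OF second, of "\<lambda>p. poly p x"]
    show ?case
      by simp algebra
  qed
qed

lemma legendre_deriv_recurrence:
  "smult (real n + 2 - real m) (legendre_deriv (n + 2) m) =
     smult (2 * real n + 3) (X * legendre_deriv (n + 1) m) - smult (real n + real m + 1) (legendre_deriv n m)"
proof (rule poly_eqI_eval, goal_cases)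
  case (1 x)
  define c :: real where "c = 2 ^ n * fact n"
  define u where "u j = poly ((pderiv ^^ (m + j)) (L ^ j)) x" for j
  define p where "p j = poly (legendre_deriv j m) x" for j
  have "4 * real (n + 2) * real (n + 1) * c \<noteq> 0"
    by (simp add: c_def)
  have u: "u n = c * p n" "u (n + 1) = 2 * real (n + 1) * c * p (n + 1)"
    "u (n + 2) = 4 * real (n + 2) * real (n + 1) * c * p (n + 2)"
    unfolding u_def p_def legendre_deriv_rodrigues[symmetric]
    by (simp_all add: c_def numeral_2_eq_2 algebra_simps)
  have "(2 * real n + 2 - real (m + n)) * u (n + 2) =
      2 * real (n + 2) * (2 * real n + 3) * x * u (n + 1) - 4 * real (m + n + 1) * real (n + 2) * real (n + 1) * u n"
    using arg_cong[OF rodrigues_recurrence[of n "m + n"], of "\<lambda>q. poly q x"]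
    by (simp add: u_def add.assoc)
  then have "4 * real (n + 2) * real (n + 1) * c * ((real n + 2 - real m) * p (n + 2)) =
      4 * real (n + 2) * real (n + 1) * c * ((2 * real n + 3) * x * p (n + 1) - (real n + real m + 1) * p n)"
    unfolding u by (simp add: algebra_simps)
  then have "(real n + 2 - real m) * p (n + 2) = (2 * real n + 3) * x * p (n + 1) - (real n + real m + 1) * p n"
    using mult_left_cancel[OF \<open>4 * real (n + 2) * real (n + 1) * c \<noteq> 0\<close>] by blast
  then show ?case
    unfolding p_def by simp
qed

lemma legendre_deriv_recurrence_values:
  "(real n + 2 - real m) * poly (legendre_deriv (n + 2) m) x =
     (2 * real n + 3) * x * poly (legendre_deriv (n + 1) m) x - (real n + real m + 1) * poly (legendre_deriv n m) x"
  "(real n + 2 - real m) * poly (pderiv (legendre_deriv (n + 2) m)) x =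
     (2 * real n + 3) * (poly (legendre_deriv (n + 1) m) x + x * poly (pderiv (legendre_deriv (n + 1) m)) x)
     - (real n + real m + 1) * poly (pderiv (legendre_deriv n m)) x"
  using arg_cong[OF legendre_deriv_recurrence[of n m], of "\<lambda>p. poly p x"]
    arg_cong[OF legendre_deriv_recurrence[of n m], of "\<lambda>p. poly (pderiv p) x"]
  by (simp_all add: pderiv_smult pderiv_diff pderiv_mult pderiv_pCons algebra_simps)

lemma legendre_deriv_succ_diag:
  "legendre_deriv (Suc m) m = smult (2 * real m + 1) (X * legendre_deriv m m)"
proof (cases m)
  case 0
  then show ?thesis
    by (simp add: legendre_deriv_def legendre_poly_def pderiv_pCons)
next
  case (Suc j)
  have "legendre_deriv j m = 0"
    using Suc by (simp add: legendre_deriv_eq_0)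
  then show ?thesis
    using legendre_deriv_recurrence[of j m] Suc by (simp add: algebra_simps)
qed

section \<open>The Legendre differential equation\<close>

definition legendre_type_ode :: "real \<Rightarrow> real \<Rightarrow> real poly \<Rightarrow> bool" where
  "legendre_type_ode a b p \<longleftrightarrow> L * pderiv (pderiv p) + smult a (X * pderiv p) + smult b p = 0"

lemma legendre_type_ode_pderiv:
  assumes "legendre_type_ode a b p"
  shows "legendre_type_ode (a + 2) (a + b) (pderiv p)"
proof -
  have "L * pderiv (pderiv (pderiv p)) + smult (a + 2) (X * pderiv (pderiv p)) + smult (a + b) (pderiv p) =
      pderiv (L * pderiv (pderiv p) + smult a (X * pderiv p) + smult b p)"
    by (rule poly_eqI_eval) (simp add: pderiv_add pderiv_diff pderiv_mult pderiv_smult pderiv_pCons algebra_simps)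
  then show ?thesis
    using assms by (simp add: legendre_type_ode_def)
qed

lemma legendre_type_ode_higher_pderiv:
  assumes "legendre_type_ode a b p"
  shows "legendre_type_ode (a + 2 * real k) (b + real k * a + real k * (real k - 1)) ((pderiv ^^ k) p)"
proof (induction k)
  case 0
  then show ?case
    using assms by simp
next
  case (Suc k)
  then show ?case
    using legendre_type_ode_pderiv[OF Suc] by (simp add: algebra_simps)
qed

lemma legendre_type_ode_smult:
  assumes "legendre_type_ode a b p"
  shows "legendre_type_ode a b (smult c p)"
proof -
  have "L * pderiv (pderiv (smult c p)) + smult a (X * pderiv (smult c p)) + smult b (smult c p) =
      smult c (L * pderiv (pderiv p) + smult a (X * pderiv p) + smult b p)"
    by (rule poly_eqI_eval) (simp add: pderiv_smult algebra_simps)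
  then show ?thesis
    using assms by (simp add: legendre_type_ode_def)
qed

lemma legendre_type_ode_L_power: "legendre_type_ode (2 - 2 * real n) (- 2 * real n) (L ^ n)"
proof -
  have first: "L * pderiv (L ^ n) = smult (2 * real n) (X * L ^ n)"
  proof (cases n)
    case (Suc j)
    then show ?thesis
      by (simp only: pderiv_L_power) (simp add: algebra_simps)
  qed simp
  have "L * pderiv (pderiv (L ^ n)) + smult (2 - 2 * real n) (X * pderiv (L ^ n)) + smult (- 2 * real n) (L ^ n) =
      pderiv (L * pderiv (L ^ n)) - pderiv (smult (2 * real n) (X * L ^ n))"
    by (rule poly_eqI_eval) (simp add: pderiv_diff pderiv_mult pderiv_smult pderiv_pCons algebra_simps)
  also have "\<dots> = 0"
    by (simp only: first diff_self)
  finally show ?thesis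
    unfolding legendre_type_ode_def .
qed

lemma legendre_deriv_ode:
  "legendre_type_ode (2 * real m + 2) (real m * (real m + 1) - real n * (real n + 1)) (legendre_deriv n m)"
proof -
  have "legendre_type_ode (2 * real m + 2) (real m * (real m + 1) - real n * (real n + 1))
      ((pderiv ^^ (m + n)) (L ^ n))"
    using legendre_type_ode_higher_pderiv[OF legendre_type_ode_L_power, of n "m + n"]
    by (simp add: algebra_simps)
  then have "legendre_type_ode (2 * real m + 2) (real m * (real m + 1) - real n * (real n + 1))
      (smult (1 / (2 ^ n * fact n)) (smult (2 ^ n * fact n) (legendre_deriv n m)))"
    by (simp only: legendre_deriv_rodrigues legendre_type_ode_smult)
  then show ?thesis
    by simp
qed

lemma legendre_type_ode_double_zero:
  assumes "legendre_type_ode a b p" and "t\<^sup>2 \<noteq> 1"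
    and "poly p t = 0" and "poly (pderiv p) t = 0"
  shows "poly ((pderiv ^^ k) p) t = 0"
  using assms(1,3,4)
proof (induction k arbitrary: a b p)
  case (Suc k)
  have "poly (L * pderiv (pderiv p) + smult a (X * pderiv p) + smult b p) t = 0"
    using Suc.prems(1) by (simp add: legendre_type_ode_def)
  then have "(t\<^sup>2 - 1) * poly (pderiv (pderiv p)) t = 0"
    using Suc.prems(2,3) by (simp add: algebra_simps power2_eq_square)
  then have "poly (pderiv (pderiv p)) t = 0"
    using assms(2) by simp
  then have "poly ((pderiv ^^ k) (pderiv p)) t = 0"
    using Suc.IH[OF legendre_type_ode_pderiv[OF Suc.prems(1)] Suc.prems(3)] by simp
  then show ?case
    by (simp add: funpow_Suc_right del: funpow.simps)
qed simp

lemma poly_higher_pderiv_degree_nonzero: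
  fixes p :: "'a::{idom,ring_char_0} poly"
  assumes "p \<noteq> 0"
  shows "poly ((pderiv ^^ degree p) p) t \<noteq> 0"
proof -
  have "degree ((pderiv ^^ degree p) p) = 0"
    by (simp add: degree_higher_pderiv)
  then obtain c where c: "(pderiv ^^ degree p) p = [:c:]"
    by (meson degree0_coeffs)
  with assms have "c \<noteq> 0"
    using higher_pderiv_nonzero[of p "degree p"] by auto
  with c show ?thesis
    by simp
qed

lemma legendre_deriv_no_double_zero:
  assumes "m \<le> n" and "t\<^sup>2 \<noteq> 1"
  shows "\<not> (poly (legendre_deriv n m) t = 0 \<and> poly (pderiv (legendre_deriv n m)) t = 0)"
  using legendre_type_ode_double_zero[OF legendre_deriv_ode assms(2)]
    poly_higher_pderiv_degree_nonzero[OF legendre_deriv_nonzero[OF assms(1)]]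
  by blast

section \<open>Sign of the Wronskian\<close>

definition wronskian :: "real poly \<Rightarrow> real poly \<Rightarrow> real \<Rightarrow> real" where
  "wronskian p q x = poly p x * poly (pderiv q) x - poly q x * poly (pderiv p) x"

lemma three_term_recurrence_wronskian_step:
  fixes a d \<alpha> \<beta> \<gamma> :: "nat \<Rightarrow> real"
  assumes rec: "\<And>i. \<alpha> i * a (i + 2) = \<beta> i * x * a (i + 1) - \<gamma> i * a i"
    and rec': "\<And>i. \<alpha> i * d (i + 2) = \<beta> i * (a (i + 1) + x * d (i + 1)) - \<gamma> i * d i"
  shows "\<beta> k * \<alpha> (k + 2) * \<alpha> (k + 1) * (a (k + 4) * d (k + 2) - a (k + 2) * d (k + 4)) =
    - 2 * \<beta> (k + 2) * \<beta> (k + 1) * \<beta> k * x * (a (k + 2))\<^sup>2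
    + \<beta> (k + 2) * \<gamma> (k + 1) * \<gamma> k * (a (k + 2) * d k - a k * d (k + 2))"
proof -
  have index: "k + 2 + 2 = k + 4" "k + 2 + 1 = k + 3" "k + 1 + 2 = k + 3" "k + 1 + 1 = k + 2"
    by simp_all
  show ?thesis
    using rec[of "k + 2"] rec'[of "k + 2"] rec[of "k + 1"] rec'[of "k + 1"] rec[of k] rec'[of k]
    unfolding index by algebra
qed

lemma legendre_wronskian_recurrence:
  "(2 * real k + 3) * (real k + 4 - real m) * (real k + 3 - real m) *
      wronskian (legendre_deriv (k + 4) m) (legendre_deriv (k + 2) m) x =
    - 2 * (2 * real k + 7) * (2 * real k + 5) * (2 * real k + 3) * x * (poly (legendre_deriv (k + 2) m) x)\<^sup>2
    + (2 * real k + 7) * (real k + real m + 2) * (real k + real m + 1) *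
      wronskian (legendre_deriv (k + 2) m) (legendre_deriv k m) x"
  using three_term_recurrence_wronskian_step[of "\<lambda>i. real i + 2 - real m" "\<lambda>i. poly (legendre_deriv i m) x"
      "\<lambda>i. 2 * real i + 3" x "\<lambda>i. real i + real m + 1" "\<lambda>i. poly (pderiv (legendre_deriv i m)) x" k,
      OF legendre_deriv_recurrence_values]
  by (simp add: wronskian_def algebra_simps)

lemma legendre_deriv_low_values:
  assumes "legendre_deriv m m = [:c:]"
  shows "poly (legendre_deriv m m) x = c" and "poly (pderiv (legendre_deriv m m)) x = 0"
    and "poly (legendre_deriv (m + 1) m) x = (2 * real m + 1) * c * x"
    and "poly (pderiv (legendre_deriv (m + 1) m)) x = (2 * real m + 1) * c"
  using legendre_deriv_succ_diag[of m] assms by (simp_all add: pderiv_smult pderiv_pCons)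

lemma legendre_wronskian_m_plus_2:
  assumes "legendre_deriv m m = [:c:]"
  shows "wronskian (legendre_deriv (m + 2) m) (legendre_deriv m m) x =
    - ((2 * real m + 3) * (2 * real m + 1) * c\<^sup>2 * x)"
  using legendre_deriv_recurrence_values(2)[of m m x] legendre_deriv_low_values[OF assms, of x]
  unfolding wronskian_def by algebra

lemma legendre_wronskian_m_plus_3:
  assumes "legendre_deriv m m = [:c:]"
  shows "3 * wronskian (legendre_deriv (m + 3) m) (legendre_deriv (m + 1) m) x =
    - ((2 * real m + 5) * (2 * real m + 3) * (2 * real m + 1)\<^sup>2 * c\<^sup>2 * x ^ 3)"
proof -
  have index: "m + 1 + 2 = m + 3" "m + 1 + 1 = m + 2"
    by simp_all
  show ?thesis
    using legendre_deriv_recurrence_values[of m m x] legendre_deriv_recurrence_values[of "m + 1" m x]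
      legendre_deriv_low_values[OF assms, of x]
    unfolding wronskian_def index of_nat_add of_nat_1 by algebra
qed

lemma legendre_wronskian_sign_step:
  assumes "m \<le> k" and "x * wronskian (legendre_deriv (k + 2) m) (legendre_deriv k m) x < 0"
  shows "x * wronskian (legendre_deriv (k + 4) m) (legendre_deriv (k + 2) m) x < 0"
proof -
  define A where "A = (2 * real k + 3) * (real k + 4 - real m) * (real k + 3 - real m)"
  define B where "B = 2 * (2 * real k + 7) * (2 * real k + 5) * (2 * real k + 3)"
  define E where "E = (2 * real k + 7) * (real k + real m + 2) * (real k + real m + 1)"
  have "A > 0" "B > 0" "E > 0"
    using assms(1) by (auto simp: A_def B_def E_def intro!: mult_pos_pos)
  have "E * (x * wronskian (legendre_deriv (k + 2) m) (legendre_deriv k m) x) < 0"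
    using \<open>E > 0\<close> assms(2) by (simp add: mult_pos_neg)
  moreover have "0 \<le> B * (x\<^sup>2 * (poly (legendre_deriv (k + 2) m) x)\<^sup>2)"
    using \<open>B > 0\<close> by simp
  moreover have "A * (x * wronskian (legendre_deriv (k + 4) m) (legendre_deriv (k + 2) m) x) =
      - (B * (x\<^sup>2 * (poly (legendre_deriv (k + 2) m) x)\<^sup>2))
      + E * (x * wronskian (legendre_deriv (k + 2) m) (legendre_deriv k m) x)"
    using arg_cong[OF legendre_wronskian_recurrence[of k m x], of "\<lambda>w. x * w"]
    unfolding A_def B_def E_def by (simp add: algebra_simps power2_eq_square)
  ultimately have "A * (x * wronskian (legendre_deriv (k + 4) m) (legendre_deriv (k + 2) m) x) < 0"
    by linarith
  then show ?thesis
    using \<open>A > 0\<close> by (simp add: mult_less_0_iff)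
qed

lemma legendre_wronskian_sign:
  assumes "m + 2 \<le> n" and "x \<noteq> 0"
  shows "x * wronskian (legendre_deriv n m) (legendre_deriv (n - 2) m) x < 0"
  using assms(1)
proof (induction n rule: less_induct)
  case (less n)
  obtain c where "c \<noteq> 0" and diag: "legendre_deriv m m = [:c:]"
    by (rule legendre_deriv_diag)
  obtain j where j: "n = m + 2 + j"
    using less.prems le_iff_add by blast
  consider "n = m + 2" | "n = m + 3" | k where "n = k + 4" and "m \<le> k"
  proof (cases j)
    case (Suc i)
    then show ?thesis
      using that j by (cases i) auto
  qed (use j that in auto)
  then show ?case
  proof cases
    case 1
    have "0 < (2 * real m + 3) * (2 * real m + 1) * c\<^sup>2 * x\<^sup>2"
      using \<open>c \<noteq> 0\<close> assms(2) by simp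
    moreover have "x * wronskian (legendre_deriv (m + 2) m) (legendre_deriv m m) x =
        - ((2 * real m + 3) * (2 * real m + 1) * c\<^sup>2 * x\<^sup>2)"
      unfolding legendre_wronskian_m_plus_2[OF diag] by (simp add: power2_eq_square)
    ultimately show ?thesis
      using 1 by simp
  next
    case 2
    have "0 < (2 * real m + 5) * (2 * real m + 3) * (2 * real m + 1)\<^sup>2 * c\<^sup>2 * x ^ 4"
      using \<open>c \<noteq> 0\<close> assms(2) by (simp add: zero_less_power_eq)
    moreover have "3 * (x * wronskian (legendre_deriv (m + 3) m) (legendre_deriv (m + 1) m) x) =
        - ((2 * real m + 5) * (2 * real m + 3) * (2 * real m + 1)\<^sup>2 * c\<^sup>2 * x ^ 4)"
      using arg_cong[OF legendre_wronskian_m_plus_3[OF diag, of x], of "\<lambda>w. x * w"]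
      by (simp add: algebra_simps power_numeral_reduce)
    ultimately show ?thesis
      using 2 by simp
  next
    case 3
    then show ?thesis
      using legendre_wronskian_sign_step less.IH[of "k + 2"] by simp
  qed
qed

section \<open>Associated Legendre functions\<close>

lemma deriv_assoc_legendre:
  assumes "-1 < t" and "t < 1"
  shows "deriv (assoc_legendre n m) t =
    deriv (\<lambda>x. sqrt (1 - x\<^sup>2) ^ m) t * poly (legendre_deriv n m) t
    + sqrt (1 - t\<^sup>2) ^ m * poly (pderiv (legendre_deriv n m)) t"
proof -
  have "0 < 1 - t\<^sup>2"
    using assms by (simp add: abs_square_less_1)
  then have "\<exists>D. ((\<lambda>x. sqrt (1 - x\<^sup>2) ^ m) has_real_derivative D) (at t)"
    by (auto intro!: exI derivative_eq_intros)
  then obtain D where D: "((\<lambda>x. sqrt (1 - x\<^sup>2) ^ m) has_real_derivative D) (at t)"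
    by blast
  then have "((\<lambda>x. sqrt (1 - x\<^sup>2) ^ m * poly (legendre_deriv n m) x) has_real_derivative
      D * poly (legendre_deriv n m) t + poly (pderiv (legendre_deriv n m)) t * sqrt (1 - t\<^sup>2) ^ m) (at t)"
    by (intro DERIV_mult poly_DERIV)
  moreover have "assoc_legendre n m = (\<lambda>x. sqrt (1 - x\<^sup>2) ^ m * poly (legendre_deriv n m) x)"
    by (simp add: fun_eq_iff assoc_legendre_def legendre_deriv_def)
  ultimately show ?thesis
    using DERIV_imp_deriv[OF D] by (simp add: DERIV_imp_deriv mult.commute)
qed

theorem propositionA5:
  fixes t :: real and m n :: nat
  assumes "-1 < t" and "t < 1"
  shows "(t \<noteq> 0 \<and> m + 2 \<le> n \<longrightarrow>
           assoc_legendre n m t * deriv (assoc_legendre (n - 2) m) t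
           - assoc_legendre (n - 2) m t * deriv (assoc_legendre n m) t \<noteq> 0)
       \<and> (m \<le> n \<longrightarrow>
           \<not> (assoc_legendre n m t = 0 \<and> deriv (assoc_legendre n m) t = 0))"
proof -
  define \<sigma> where "\<sigma> = sqrt (1 - t\<^sup>2) ^ m"
  have "t\<^sup>2 < 1"
    using assms by (simp add: abs_square_less_1)
  then have "\<sigma> > 0" and "t\<^sup>2 \<noteq> 1"
    by (simp_all add: \<sigma>_def)
  have assoc_eq: "assoc_legendre k m t = \<sigma> * poly (legendre_deriv k m) t" for k
    by (simp add: assoc_legendre_def legendre_deriv_def \<sigma>_def)
  note derivative = deriv_assoc_legendre[OF assms]
  show ?thesis
  proof (intro conjI impI)
    assume "t \<noteq> 0 \<and> m + 2 \<le> n"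
    then have "t * wronskian (legendre_deriv n m) (legendre_deriv (n - 2) m) t < 0"
      using legendre_wronskian_sign by blast
    moreover have "assoc_legendre n m t * deriv (assoc_legendre (n - 2) m) t
        - assoc_legendre (n - 2) m t * deriv (assoc_legendre n m) t =
        \<sigma>\<^sup>2 * wronskian (legendre_deriv n m) (legendre_deriv (n - 2) m) t"
      unfolding assoc_eq derivative wronskian_def \<sigma>_def by (simp add: algebra_simps power2_eq_square)
    ultimately show "assoc_legendre n m t * deriv (assoc_legendre (n - 2) m) t
        - assoc_legendre (n - 2) m t * deriv (assoc_legendre n m) t \<noteq> 0"
      using \<open>\<sigma> > 0\<close> by auto
  next
    assume "m \<le> n"
    then show "\<not> (assoc_legendre n m t = 0 \<and> deriv (assoc_legendre n m) t = 0)"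
      using legendre_deriv_no_double_zero[OF _ \<open>t\<^sup>2 \<noteq> 1\<close>] \<open>\<sigma> > 0\<close>
      unfolding assoc_eq derivative \<sigma>_def[symmetric] by auto
  qed
qed

end
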